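(* Let the number of buffer lanes satisfy $L>1$, the number of colors satisfy $C>1$, and the lane width satisfy $W>1$. Then for every $n\in\mathbb{N}$ there exists an upstream sequence of colors $c_1,\dots,c_N\in\{1,\dots,C\}$ such that the minimum number of color changes achievable under the ``store-then-retrieve'' regime is at least $n$ larger than the minimum number of color changes achievable under ``flexible storage and retrieval''.
   Context: Paint shop problem with a multi-lane buffer: an upstream sequence of $N$ cars with colors $c_1,\dots,c_N\in\{1,\dots,C\}$ is processed in order. The buffer consists of $L$ lanes, each a first-in-first-out queue of capacity $W$. At each step exactly one operation is performed: either a store operation, which removes the first remaining car of the upstream sequence and appends it to the back of a lane that is not full; or a retrieve operation, which removes the front car of a nonempty lane and appends it to the end of the downstream sequence. The process ends when the upstream sequence and the buffer are both empty, so the downstream sequence is a permutation of the $N$ cars. The number of color changes of a solution is the number of indices $k$ with $1\le k<N$ such that the $k$-th and $(k+1)$-st cars of the downstream sequence have different colors. Under ``flexible storage and retrieval'', store and retrieve operations may be performed in any order (whenever valid). Under ``store-then-retrieve'', starting from an empty buffer the operations alternate in phases: a storage phase in which cars are stored until the buffer is completely full (or the upstream sequence is exhausted), followed by a retrieval phase in which cars are retrieved until the buffer is completely empty; these phases repeat until all cars have been processed. In each regime, the minimum is taken over all valid operation sequences obeying that regime. *)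

theory Defs
  imports Main
begin

text \<open>A state: (upstream colors, lanes (each a FIFO queue, front = head), downstream colors).
  Only colors matter for the number of color changes, so cars are represented by their colors.\<close>
type_synonym state = "nat list \<times> nat list list \<times> nat list"

definition store_step :: "nat \<Rightarrow> nat \<Rightarrow> state \<Rightarrow> state \<Rightarrow> bool" where
  "store_step L W s s' \<longleftrightarrow>
     (\<exists>x u B d i. s = (x # u, B, d) \<and> i < L \<and> length (B ! i) < W \<and>
        s' = (u, B[i := (B ! i) @ [x]], d))"

definition retr_step :: "nat \<Rightarrow> state \<Rightarrow> state \<Rightarrow> bool" where
  "retr_step L s s' \<longleftrightarrow>
     (\<exists>u B d i y q. s = (u, B, d) \<and> i < L \<and> B ! i = y # q \<and>
        s' = (u, B[i := q], d @ [y]))"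

definition empty_buffer :: "nat \<Rightarrow> nat list list" where
  "empty_buffer L = replicate L []"

definition init_state :: "nat \<Rightarrow> nat list \<Rightarrow> state" where
  "init_state L c = (c, empty_buffer L, [])"

definition final_state :: "nat \<Rightarrow> nat list \<Rightarrow> state" where
  "final_state L d = ([], empty_buffer L, d)"

definition flex_solution :: "nat \<Rightarrow> nat \<Rightarrow> nat list \<Rightarrow> nat list \<Rightarrow> bool" where
  "flex_solution L W c d \<longleftrightarrow>
     (\<lambda>s s'. store_step L W s s' \<or> retr_step L s s')\<^sup>*\<^sup>* (init_state L c) (final_state L d)"

definition buffer_full :: "nat \<Rightarrow> state \<Rightarrow> bool" where
  "buffer_full W s \<longleftrightarrow> (\<forall>q \<in> set (fst (snd s)). length q = W)"

definition str_phase :: "nat \<Rightarrow> nat \<Rightarrow> state \<Rightarrow> state \<Rightarrow> bool" where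
  "str_phase L W s s' \<longleftrightarrow>
     (\<exists>m. (store_step L W)\<^sup>*\<^sup>* s m \<and> (fst m = [] \<or> buffer_full W m) \<and>
          (retr_step L)\<^sup>*\<^sup>* m s' \<and> fst (snd s') = empty_buffer L)"

definition str_solution :: "nat \<Rightarrow> nat \<Rightarrow> nat list \<Rightarrow> nat list \<Rightarrow> bool" where
  "str_solution L W c d \<longleftrightarrow> (str_phase L W)\<^sup>*\<^sup>* (init_state L c) (final_state L d)"

definition color_changes :: "nat list \<Rightarrow> nat" where
  "color_changes d = card {k. k + 1 < length d \<and> d ! k \<noteq> d ! (k + 1)}"

definition min_flex :: "nat \<Rightarrow> nat \<Rightarrow> nat list \<Rightarrow> nat" where
  "min_flex L W c = (LEAST k. \<exists>d. flex_solution L W c d \<and> color_changes d = k)"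

definition min_str :: "nat \<Rightarrow> nat \<Rightarrow> nat list \<Rightarrow> nat" where
  "min_str L W c = (LEAST k. \<exists>d. str_solution L W c d \<and> color_changes d = k)"

end

theory Submission
  imports Defs "HOL-Library.Multiset"
begin

(* Let K = L W be the capacity of the buffer and take the upstream sequence consisting of n copies
   of the four blocks 1^(K-1) 2, 2 1^(K-1), 1^(K-1) 2, 2 1^(K-1), each of length K.
   Under store-then-retrieve every phase starts from an empty buffer, takes exactly the next K
   cars and releases a permutation of them; so every block, which contains both colors, costs at
   least one color change, 4n in total.  Under flexible storage the 1s are passed straight through
   a free lane, while the two adjacent pairs of 2s of each group of four blocks are parked in two
   lanes (here L, W >= 2 is used) and released together, which costs at most 3n changes. *)

lemma color_changes_Nil [simp]: "color_changes [] = 0"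
  by (simp add: color_changes_def)

lemma color_changes_Cons:
  "color_changes (x # xs) = (if xs \<noteq> [] \<and> x \<noteq> hd xs then 1 else 0) + color_changes xs"
proof (cases xs)
  case Nil
  then show ?thesis by (simp add: color_changes_def)
next
  case (Cons y zs)
  define S where "S d = {k. k + 1 < length d \<and> d ! k \<noteq> d ! (k + 1)}" for d :: "nat list"
  have split: "S (x # y # zs) = (if x = y then {} else {0}) \<union> Suc ` S (y # zs)" (is "?A = ?B")
  proof
    show "?A \<subseteq> ?B"
    proof
      fix k assume "k \<in> ?A"
      then show "k \<in> ?B" by (cases k) (auto simp: S_def)
    qed
  qed (auto simp: S_def)
  have fin: "finite (S (y # zs))"
    unfolding S_def by (rule finite_subset[of _ "{..<length (y # zs)}"]) auto
  have "card (S (x # y # zs)) = card (if x = y then {} else {0}) + card (Suc ` S (y # zs))"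
    unfolding split using fin by (subst card_Un_disjoint) auto
  moreover have "color_changes d = card (S d)" for d
    by (simp add: color_changes_def S_def)
  ultimately show ?thesis
    using Cons by (cases "x = y") (simp_all add: card_image)
qed

lemma color_changes_replicate [simp]: "color_changes (replicate n x) = 0"
proof (induction n)
  case (Suc n)
  then show ?case by (cases n) (simp_all add: color_changes_Cons)
qed simp

lemma color_changes_append_ge: "color_changes xs + color_changes ys \<le> color_changes (xs @ ys)"
  by (induction xs) (auto simp: color_changes_Cons hd_append)

lemma color_changes_append_le: "color_changes (xs @ ys) \<le> color_changes xs + color_changes ys + 1"
  by (induction xs) (auto simp: color_changes_Cons hd_append)

lemma color_changes_concat_replicate:
  "color_changes (concat (replicate n xs)) \<le> n * (color_changes xs + 1)"
proof (induction n)
  case (Suc n)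
  then show ?case using color_changes_append_le[of xs "concat (replicate n xs)"] by simp
qed simp

lemma color_changes_pos:
  assumes "x \<in> set xs" "y \<in> set xs" "x \<noteq> y"
  shows "0 < color_changes xs"
proof (rule ccontr)
  assume "\<not> 0 < color_changes xs"
  then have "\<forall>z \<in> set xs. z = hd xs"
    by (induction xs) (auto simp: color_changes_Cons split: if_splits)
  with assms show False by metis
qed

abbreviation flex_step :: "nat \<Rightarrow> nat \<Rightarrow> state \<Rightarrow> state \<Rightarrow> bool" where
  "flex_step L W \<equiv> \<lambda>s s'. store_step L W s s' \<or> retr_step L s s'"

lemma store_steps_flex_steps: "(store_step L W)\<^sup>*\<^sup>* s t \<Longrightarrow> (flex_step L W)\<^sup>*\<^sup>* s t"
  using mono_rtranclp[of "store_step L W" "flex_step L W"] by blast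

lemma retr_steps_flex_steps: "(retr_step L)\<^sup>*\<^sup>* s t \<Longrightarrow> (flex_step L W)\<^sup>*\<^sup>* s t"
  using mono_rtranclp[of "retr_step L" "flex_step L W"] by blast

lemma store_lane:
  assumes "i < length B" "i < L" "length (B ! i) + length x \<le> W"
  shows "(store_step L W)\<^sup>*\<^sup>* (x @ u, B, d) (u, B[i := B ! i @ x], d)"
  using assms
proof (induction x arbitrary: B)
  case (Cons y x)
  have "store_step L W (y # x @ u, B, d) (x @ u, B[i := B ! i @ [y]], d)"
    using Cons.prems unfolding store_step_def by auto
  also have "(store_step L W)\<^sup>*\<^sup>* \<dots> (u, B[i := B ! i @ y # x], d)"
    using Cons.IH[of "B[i := B ! i @ [y]]"] Cons.prems by simp
  finally show ?case by simp
qed simp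

lemma retr_lane:
  assumes "i < length B" "i < L"
  shows "(retr_step L)\<^sup>*\<^sup>* (u, B, d) (u, B[i := []], d @ B ! i)"
proof -
  have "(retr_step L)\<^sup>*\<^sup>* (u, B[i := q], d) (u, B[i := []], d @ q)" for q d
  proof (induction q arbitrary: d)
    case (Cons y q)
    have "retr_step L (u, B[i := y # q], d) (u, B[i := q], d @ [y])"
      using assms unfolding retr_step_def by fastforce
    with Cons.IH[of "d @ [y]"] show ?case
      by (simp add: converse_rtranclp_into_rtranclp)
  qed simp
  from this[of "B ! i" d] show ?thesis by simp
qed

lemma store_lanes:
  assumes "length Bs \<le> L" "\<forall>q \<in> set Bs. length q \<le> W"
  shows "(store_step L W)\<^sup>*\<^sup>* (concat Bs @ u, replicate L [], d) (u, Bs @ replicate (L - length Bs) [], d)"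
  using assms
proof (induction Bs arbitrary: u rule: rev_induct)
  case (snoc b Bs)
  define k where "k = L - Suc (length Bs)"
  have k: "L - length Bs = Suc k"
    using snoc.prems(1) unfolding k_def by simp
  have "(store_step L W)\<^sup>*\<^sup>* (concat Bs @ b @ u, replicate L [], d) (b @ u, Bs @ [] # replicate k [], d)"
    using snoc k by simp
  also have "(store_step L W)\<^sup>*\<^sup>* \<dots> (u, Bs @ b # replicate k [], d)"
    using store_lane[of "length Bs" "Bs @ [] # replicate k []" L b W u d] snoc.prems
    by (simp add: list_update_append)
  finally show ?case
    by (simp add: k_def)
qed simp

lemma retrieve_lanes:
  assumes "k + length Bs \<le> L"
  shows "(retr_step L)\<^sup>*\<^sup>* (u, replicate k [] @ Bs, d) (u, replicate (k + length Bs) [], d @ concat Bs)"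
  using assms
proof (induction Bs arbitrary: k d)
  case (Cons b Bs)
  have "(retr_step L)\<^sup>*\<^sup>* (u, replicate k [] @ b # Bs, d) (u, replicate (Suc k) [] @ Bs, d @ b)"
    using retr_lane[of k "replicate k [] @ b # Bs" L u d] Cons.prems
    by (simp add: list_update_append nth_append replicate_app_Cons_same)
  also have "(retr_step L)\<^sup>*\<^sup>* \<dots> (u, replicate (k + length (b # Bs)) [], d @ concat (b # Bs))"
    using Cons.IH[of "Suc k" "d @ b"] Cons.prems by simp
  finally show ?case .
qed simp

lemma pass_through:
  assumes "i < length B" "i < L" "B ! i = []" "0 < W"
  shows "(flex_step L W)\<^sup>*\<^sup>* (x @ u, B, d) (u, B, d @ x)"
proof (induction x arbitrary: d)
  case (Cons y x)
  have store: "store_step L W (y # x @ u, B, d) (x @ u, B[i := [y]], d)"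
    using assms unfolding store_step_def by fastforce
  have "retr_step L (x @ u, B[i := [y]], d) (x @ u, (B[i := [y]])[i := []], d @ [y])"
    using assms unfolding retr_step_def by fastforce
  moreover have "(B[i := [y]])[i := []] = B"
    using assms(3) by (metis list_update_id list_update_overwrite)
  ultimately have retr: "retr_step L (x @ u, B[i := [y]], d) (x @ u, B, d @ [y])"
    by simp
  have "(flex_step L W)\<^sup>*\<^sup>* (y # x @ u, B, d) (u, B, (d @ [y]) @ x)"
    using store retr Cons.IH[of "d @ [y]"] by (blast intro: converse_rtranclp_into_rtranclp)
  then show ?case
    by simp
qed simp

lemma ex_equal_length_chunks:
  "length x = k * W \<Longrightarrow> \<exists>Bs. concat Bs = x \<and> length Bs = k \<and> (\<forall>q \<in> set Bs. length q = W)"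
proof (induction k arbitrary: x)
  case (Suc k)
  have "length (drop W x) = k * W"
    using Suc.prems by simp
  then obtain Bs where "concat Bs = drop W x" "length Bs = k" "\<forall>q \<in> set Bs. length q = W"
    using Suc.IH by blast
  with Suc.prems show ?case
    by (intro exI[of _ "take W x # Bs"]) auto
qed simp

lemma str_phase_block:
  assumes "length x = L * W"
  shows "str_phase L W (x @ u, empty_buffer L, d) (u, empty_buffer L, d @ x)"
proof -
  obtain Bs where Bs: "concat Bs = x" "length Bs = L" "\<forall>q \<in> set Bs. length q = W"
    using ex_equal_length_chunks[of x L W] assms by (auto simp: mult.commute)
  have "(store_step L W)\<^sup>*\<^sup>* (x @ u, replicate L [], d) (u, Bs, d)"
    using store_lanes[of Bs L W u d] Bs by simp
  moreover have "buffer_full W (u, Bs, d)"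
    using Bs by (simp add: buffer_full_def)
  moreover have "(retr_step L)\<^sup>*\<^sup>* (u, Bs, d) (u, replicate L [], d @ x)"
    using retrieve_lanes[of 0 Bs L u d] Bs by simp
  ultimately show ?thesis
    unfolding str_phase_def empty_buffer_def by fastforce
qed

lemma str_phases_blocks:
  assumes "\<forall>b \<in> set bs. length b = L * W"
  shows "(str_phase L W)\<^sup>*\<^sup>* (concat bs, empty_buffer L, d) ([], empty_buffer L, d @ concat bs)"
  using assms
proof (induction bs arbitrary: d)
  case (Cons b bs)
  then show ?case
    using str_phase_block[of b L W "concat bs" d] Cons.IH[of "d @ b"]
    by (simp add: converse_rtranclp_into_rtranclp)
qed simp

lemma mset_concat_list_update:
  "i < length B \<Longrightarrow> mset (concat (B[i := q])) + mset (B ! i) = mset (concat B) + mset q"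
proof (induction B arbitrary: i)
  case (Cons b B)
  then show ?case by (cases i) (auto simp: algebra_simps)
qed simp

(* The hypothesis length B = L cannot be dropped: a step at a lane index i with length B <= i < L
   would read the unspecified value B ! i. *)
lemma store_steps_shape:
  assumes "(store_step L W)\<^sup>*\<^sup>* (u, B, d) (u', B', d')" "length B = L" "\<forall>q \<in> set B. length q \<le> W"
  shows "\<exists>p. u = p @ u' \<and> d' = d \<and> length B' = L \<and> (\<forall>q \<in> set B'. length q \<le> W) \<and>
    mset (concat B') = mset (concat B) + mset p"
  using assms(1)
proof (induction "(u', B', d')" arbitrary: u' B' d' rule: rtranclp_induct)
  case base
  then show ?case using assms(2,3) by simp
next
  case (step s)
  obtain u1 B1 where s: "s = (u1, B1, d')"
    using step.hyps(2) unfolding store_step_def by auto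
  from step(3)[OF s] obtain p where IH: "u = p @ u1" "d' = d" "length B1 = L"
    "\<forall>q \<in> set B1. length q \<le> W" "mset (concat B1) = mset (concat B) + mset p"
    by blast
  from step.hyps(2) obtain x i where x: "u1 = x # u'" "i < L" "length (B1 ! i) < W"
    "B' = B1[i := B1 ! i @ [x]]"
    unfolding s store_step_def by auto
  have "\<forall>q \<in> set B'. length q \<le> W"
    using IH(4) x set_update_subset_insert[of B1 i "B1 ! i @ [x]"] by fastforce
  moreover have "mset (concat B') = mset (concat B1) + {#x#}"
    using mset_concat_list_update[of i B1 "B1 ! i @ [x]"] x IH(3) by simp
  ultimately show ?case
    using IH x by (intro exI[of _ "p @ [x]"]) simp
qed

lemma retr_steps_shape:
  assumes "(retr_step L)\<^sup>*\<^sup>* (u, B, d) (u', B', d')" "length B = L"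
  shows "\<exists>e. u' = u \<and> d' = d @ e \<and> length B' = L \<and> mset (concat B') + mset e = mset (concat B)"
  using assms(1)
proof (induction "(u', B', d')" arbitrary: u' B' d' rule: rtranclp_induct)
  case base
  then show ?case using assms(2) by simp
next
  case (step s)
  obtain B1 d1 where s: "s = (u', B1, d1)"
    using step.hyps(2) unfolding retr_step_def by auto
  from step(3)[OF s] obtain e where IH: "u' = u" "d1 = d @ e" "length B1 = L"
    "mset (concat B1) + mset e = mset (concat B)"
    by blast
  from step.hyps(2) obtain i y q where y: "i < L" "B1 ! i = y # q" "B' = B1[i := q]" "d' = d1 @ [y]"
    unfolding s retr_step_def by auto
  have "mset (concat B1) = add_mset y (mset (concat B'))"
    using mset_concat_list_update[of i B1 q] y IH(3) by simp
  then have "mset (concat B') + mset (e @ [y]) = mset (concat B)"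
    using IH(4) by simp
  then show ?case
    using IH y by (intro exI[of _ "e @ [y]"]) simp
qed

lemma length_concat_le: "\<forall>q \<in> set B. length q \<le> W \<Longrightarrow> length (concat B) \<le> length B * W"
  by (induction B) auto

lemma str_phase_from_empty_buffer:
  assumes "str_phase L W (u, empty_buffer L, d) (u', B', d')"
  shows "\<exists>p e. u = p @ u' \<and> B' = empty_buffer L \<and> d' = d @ e \<and> mset e = mset p \<and>
    length p = min (L * W) (length u)"
proof -
  obtain um Bm dm where
    store: "(store_step L W)\<^sup>*\<^sup>* (u, replicate L [], d) (um, Bm, dm)" and
    stop: "um = [] \<or> buffer_full W (um, Bm, dm)" and
    retr: "(retr_step L)\<^sup>*\<^sup>* (um, Bm, dm) (u', B', d')" and
    B': "B' = empty_buffer L"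
    using assms unfolding str_phase_def empty_buffer_def by fastforce
  obtain p where p: "u = p @ um" "dm = d" "length Bm = L" "\<forall>q \<in> set Bm. length q \<le> W"
    "mset (concat Bm) = mset p"
    using store_steps_shape[OF store] by auto
  obtain e where e: "u' = um" "d' = d @ e" "mset (concat B') + mset e = mset (concat Bm)"
    using retr_steps_shape[OF retr] p(2,3) by auto
  have "mset e = mset p"
    using e(3) p(5) B' by (simp add: empty_buffer_def)
  have len_p: "length p = length (concat Bm)"
    using p(5) by (metis size_mset)
  then have "length p \<le> L * W"
    using length_concat_le[OF p(4)] p(3) by simp
  moreover have "length p = L * W" if "um \<noteq> []"
  proof -
    have "\<forall>q \<in> set Bm. length q = W"
      using stop that by (simp add: buffer_full_def)
    then have "length (concat Bm) = length Bm * W"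
      by (induction Bm) auto
    then show ?thesis
      using len_p p(3) by simp
  qed
  ultimately have "length p = min (L * W) (length u)"
    using p(1) by (cases "um = []") auto
  with p(1) e B' \<open>mset e = mset p\<close> show ?thesis
    by blast
qed

lemma str_phases_color_changes_ge:
  assumes "(str_phase L W)\<^sup>*\<^sup>* (concat bs, empty_buffer L, d0) ([], empty_buffer L, d)"
    and "\<forall>b \<in> set bs. length b = L * W \<and> (\<exists>x \<in> set b. \<exists>y \<in> set b. x \<noteq> y)"
  shows "color_changes d0 + length bs \<le> color_changes d"
  using assms
proof (induction "(concat bs, empty_buffer L, d0)" arbitrary: bs d0 rule: converse_rtranclp_induct)
  case base
  then show ?case
    by (cases bs) auto
next
  case (step s')
  obtain u' B' d' where s': "s' = (u', B', d')"
    by (cases s')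
  obtain p e where pe: "concat bs = p @ u'" "B' = empty_buffer L" "d' = d0 @ e"
    "mset e = mset p" "length p = min (L * W) (length (concat bs))"
    using str_phase_from_empty_buffer[of L W "concat bs" d0 u' B' d'] step.hyps(1) s' by auto
  show ?case
  proof (cases bs)
    case Nil
    then have "e = []"
      using pe by simp
    then show ?thesis
      using step.hyps(3)[of "[]" d0] s' pe Nil by simp
  next
    case (Cons b bs')
    then have "p = b" "u' = concat bs'"
      using pe(1,5) step.prems by auto
    then obtain x y where "x \<in> set e" "y \<in> set e" "x \<noteq> y"
      using step.prems Cons pe(4) by (metis list.set_intros(1) mset_eq_setD)
    then have "color_changes d0 + 1 \<le> color_changes (d0 @ e)"
      using color_changes_pos color_changes_append_ge[of d0 e] by fastforce
    moreover have "color_changes (d0 @ e) + length bs' \<le> color_changes d"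
      using step.hyps(3)[of bs' "d0 @ e"] s' pe \<open>u' = concat bs'\<close> step.prems Cons by simp
    ultimately show ?thesis
      using Cons by simp
  qed
qed

lemma flex_period:
  assumes "2 \<le> L" "2 \<le> W"
  shows "(flex_step L W)\<^sup>*\<^sup>* (r @ a # a # r @ r @ a # a # r @ u, empty_buffer L, d)
    (u, empty_buffer L, d @ r @ r @ r @ a # a # a # a # r)"
proof -
  obtain L' where L_eq: "L = Suc (Suc L')"
    using assms(1) by (metis add_2_eq_Suc le_Suc_ex)
  define R where "R = replicate L' ([] :: nat list)"
  have E: "empty_buffer L = [] # [] # R"
    by (simp add: empty_buffer_def L_eq R_def)
  have W_pos: "0 < W"
    using assms(2) by simp
  have "(flex_step L W)\<^sup>*\<^sup>* (r @ a # a # r @ r @ a # a # r @ u, [] # [] # R, d)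
      (a # a # r @ r @ a # a # r @ u, [] # [] # R, d @ r)"
    using pass_through[of 0 "[] # [] # R" L W r "a # a # r @ r @ a # a # r @ u" d] L_eq W_pos by simp
  also have "(flex_step L W)\<^sup>*\<^sup>* \<dots> (r @ r @ a # a # r @ u, [a, a] # [] # R, d @ r)"
    using store_steps_flex_steps store_lane[of 0 "[] # [] # R" L "[a, a]" W "r @ r @ a # a # r @ u" "d @ r"]
      L_eq assms(2) by simp
  also have "(flex_step L W)\<^sup>*\<^sup>* \<dots> (a # a # r @ u, [a, a] # [] # R, d @ r @ r @ r)"
    using pass_through[of 1 "[a, a] # [] # R" L W "r @ r" "a # a # r @ u" "d @ r"] L_eq W_pos by simp
  also have "(flex_step L W)\<^sup>*\<^sup>* \<dots> (r @ u, [a, a] # [a, a] # R, d @ r @ r @ r)"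
    using store_steps_flex_steps store_lane[of 1 "[a, a] # [] # R" L "[a, a]" W "r @ u" "d @ r @ r @ r"]
      L_eq assms(2) by simp
  also have "(flex_step L W)\<^sup>*\<^sup>* \<dots> (r @ u, [] # [] # R, d @ r @ r @ r @ [a, a, a, a])"
    using retr_steps_flex_steps retrieve_lanes[of 0 "[a, a] # [a, a] # R" L "r @ u" "d @ r @ r @ r"] L_eq
    by (simp add: R_def)
  also have "(flex_step L W)\<^sup>*\<^sup>* \<dots> (u, [] # [] # R, d @ r @ r @ r @ [a, a, a, a] @ r)"
    using pass_through[of 0 "[] # [] # R" L W r u "d @ r @ r @ r @ [a, a, a, a]"] L_eq W_pos by simp
  finally show ?thesis
    by (simp add: E)
qed

lemma flex_periods:
  assumes "2 \<le> L" "2 \<le> W"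
  shows "(flex_step L W)\<^sup>*\<^sup>* (concat (replicate n (r @ a # a # r @ r @ a # a # r)) @ u, empty_buffer L, d)
    (u, empty_buffer L, d @ concat (replicate n (r @ r @ r @ a # a # a # a # r)))"
proof (induction n arbitrary: d)
  case (Suc n)
  show ?case
    using rtranclp_trans[OF flex_period[OF assms] Suc.IH] by simp
qed simp

definition alternating_blocks :: "nat \<Rightarrow> nat \<Rightarrow> nat list list" where
  "alternating_blocks K n = concat (replicate n
     [replicate (K - 1) 1 @ [2], 2 # replicate (K - 1) 1, replicate (K - 1) 1 @ [2], 2 # replicate (K - 1) 1])"

lemma concat_alternating_blocks:
  "concat (alternating_blocks K n) =
    concat (replicate n (replicate (K - 1) 1 @ 2 # 2 # replicate (K - 1) 1 @ replicate (K - 1) 1 @ 2 # 2 # replicate (K - 1) 1))"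
  by (induction n) (simp_all add: alternating_blocks_def)

lemma min_flex_alternating_blocks:
  assumes "2 \<le> L" "2 \<le> W"
  shows "min_flex L W (concat (alternating_blocks (L * W) n)) \<le> 3 * n"
proof -
  let ?r = "replicate (L * W - 1) (1 :: nat)"
  let ?out = "?r @ ?r @ ?r @ 2 # 2 # 2 # 2 # ?r"
  have "flex_solution L W (concat (alternating_blocks (L * W) n)) (concat (replicate n ?out))"
    using flex_periods[OF assms, of n ?r 2 "[]" "[]"]
    by (simp add: flex_solution_def init_state_def final_state_def concat_alternating_blocks)
  then have "min_flex L W (concat (alternating_blocks (L * W) n)) \<le> color_changes (concat (replicate n ?out))"
    unfolding min_flex_def by (blast intro: Least_le)
  moreover have "color_changes ?out \<le> 2"
  proof -
    have out: "?out = replicate (3 * (L * W - 1)) 1 @ replicate 4 2 @ ?r"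
      by (simp add: replicate_add[symmetric] numeral_eq_Suc)
    show ?thesis
      unfolding out using color_changes_append_le[of "replicate (3 * (L * W - 1)) (1 :: nat)" "replicate 4 2 @ ?r"]
        color_changes_append_le[of "replicate 4 (2 :: nat)" ?r]
      by simp
  qed
  then have "n * (color_changes ?out + 1) \<le> 3 * n"
    by simp
  then have "color_changes (concat (replicate n ?out)) \<le> 3 * n"
    using color_changes_concat_replicate[of n ?out] by linarith
  ultimately show ?thesis
    by simp
qed

lemma min_str_alternating_blocks:
  assumes "2 \<le> L * W"
  shows "4 * n \<le> min_str L W (concat (alternating_blocks (L * W) n))"
proof -
  let ?bs = "alternating_blocks (L * W) n"
  have blocks: "\<forall>b \<in> set ?bs. length b = L * W \<and> (\<exists>x \<in> set b. \<exists>y \<in> set b. x \<noteq> y)"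
    using assms by (auto simp: alternating_blocks_def)
  then have "str_solution L W (concat ?bs) (concat ?bs)"
    using str_phases_blocks[of ?bs L W "[]"]
    by (simp add: str_solution_def init_state_def final_state_def empty_buffer_def)
  then have "\<exists>k d. str_solution L W (concat ?bs) d \<and> color_changes d = k"
    by blast
  then have "\<exists>d. str_solution L W (concat ?bs) d \<and> color_changes d = min_str L W (concat ?bs)"
    unfolding min_str_def by (rule LeastI_ex)
  then obtain d where "str_solution L W (concat ?bs) d" "color_changes d = min_str L W (concat ?bs)"
    by blast
  then have "length ?bs \<le> min_str L W (concat ?bs)"
    using str_phases_color_changes_ge[of L W ?bs "[]" d] blocks
    by (simp add: str_solution_def init_state_def final_state_def)
  moreover have "length ?bs = 4 * n"
    by (induction n) (simp_all add: alternating_blocks_def)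
  ultimately show ?thesis
    by simp
qed

theorem theorem1:
  fixes L C W :: nat
  assumes "L > 1" and "C > 1" and "W > 1"
  shows "\<forall>n::nat. \<exists>c::nat list. set c \<subseteq> {1..C} \<and> min_str L W c \<ge> min_flex L W c + n"
proof
  fix n :: nat
  let ?c = "concat (alternating_blocks (L * W) n)"
  have "set ?c \<subseteq> {1..C}"
    using assms(2) by (auto simp: alternating_blocks_def)
  moreover have "min_flex L W ?c \<le> 3 * n"
    using assms(1,3) by (intro min_flex_alternating_blocks) auto
  moreover have "4 * n \<le> min_str L W ?c"
    using less_1_mult[OF assms(1,3)] by (intro min_str_alternating_blocks) simp
  ultimately show "\<exists>c::nat list. set c \<subseteq> {1..C} \<and> min_str L W c \<ge> min_flex L W c + n"
    by (intro exI[of _ ?c]) simp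
qed

end
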